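(* Let $L^x,L^y>0$, let $i\neq j$ be two boxes, each box $k\in\{i,j\}$ having center $(c^x_k,c^y_k)$, side lengths $(\ell^x_k,\ell^y_k)$, area $\alpha_k>0$ and constants $lb^s_k,ub^s_k$. Let $$Q^{FLP}=\{(c_i,c_j,\ell_i,\ell_j)\in\mathbb{R}^8:\ \tfrac12\ell^s_k\le c^s_k\le L^s-\tfrac12\ell^s_k,\ lb^s_k\le\ell^s_k\le ub^s_k,\ \ell^x_k\ell^y_k\ge\alpha_k\ \ \forall s\in\{x,y\},k\in\{i,j\}\}.$$ Let $E^U$ be the set of $(c,\ell,u)$ with $(c,\ell)=(c_i,c_j,\ell_i,\ell_j)\in Q^{FLP}$, $u=(u^s_{p,q})_{s\in\{x,y\},(p,q)\in\{(i,j),(j,i)\}}\in\{0,1\}^4$ having exactly one entry equal to $1$, and $u^s_{p,q}=1\Rightarrow\mathscr{B}_p\leftarrow_s\mathscr{B}_q$. Let $E^8$ be the set of $(c,\ell,z)$ with $(c,\ell)\in Q^{FLP}$, $z=(z^s_{p,q})\in\{0,1\}^4$ not identically zero, $z^s_{i,j}+z^s_{j,i}\le1$ for each $s$, $z^s_{p,q}=1\Rightarrow\mathscr{B}_p\leftarrow_s\mathscr{B}_q$, and $z^s_{i,j}=z^s_{j,i}=0\Rightarrow(\mathscr{B}_i\not\leftarrow_s\mathscr{B}_j$ and $\mathscr{B}_j\not\leftarrow_s\mathscr{B}_i)$. Suppose $a,b\in\mathbb{R}^4$, $\delta=(\delta^s_{p,q})\in\mathbb{R}^4$ and $f\in\mathbb{R}$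 are such that $a^Tc+b^T\ell+\delta^Tu\le f$ for all $(c,\ell,u)\in E^U$. If $\delta^y_{i,j}=\delta^y_{j,i}=0$ or $\delta^x_{i,j}=\delta^x_{j,i}=0$, then $a^Tc+b^T\ell+\delta^Tz\le f$ for all $(c,\ell,z)\in E^8$ (with $\delta^s_{p,q}$ multiplying $z^s_{p,q}$).
   Context: $\mathscr{B}_p\leftarrow_s\mathscr{B}_q$ means $c^s_p+\tfrac12\ell^s_p\le c^s_q-\tfrac12\ell^s_q$, and $\mathscr{B}_p\not\leftarrow_s\mathscr{B}_q$ means $c^s_p+\tfrac12\ell^s_p\ge c^s_q-\tfrac12\ell^s_q$. $E^U$ and $E^8$ are the paper's embeddings $\operatorname{Em}(Q^{FLP},D^4,U^4)$ and $\operatorname{Em}(Q^{FLP},D^8,C^8)$. In the paper $ub^s_k=\min\{\sqrt{\alpha_k\beta_k},L^s\}$, $lb^s_k=\beta_k/ub^s_k$. *)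

theory Defs
  imports Complex_Main
begin

datatype axis = AX | AY

definition precedes ::
  "('k \<Rightarrow> axis \<Rightarrow> real) \<Rightarrow> ('k \<Rightarrow> axis \<Rightarrow> real) \<Rightarrow> axis \<Rightarrow> 'k \<Rightarrow> 'k \<Rightarrow> bool" where
  "precedes c l s p q \<longleftrightarrow> c p s + l p s / 2 \<le> c q s - l q s / 2"

definition not_precedes ::
  "('k \<Rightarrow> axis \<Rightarrow> real) \<Rightarrow> ('k \<Rightarrow> axis \<Rightarrow> real) \<Rightarrow> axis \<Rightarrow> 'k \<Rightarrow> 'k \<Rightarrow> bool" where
  "not_precedes c l s p q \<longleftrightarrow> c p s + l p s / 2 \<ge> c q s - l q s / 2"

text \<open>The set Q^FLP for the two boxes i, j (only the values at i and j matter).\<close>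
definition in_QFLP ::
  "(axis \<Rightarrow> real) \<Rightarrow> ('k \<Rightarrow> axis \<Rightarrow> real) \<Rightarrow> ('k \<Rightarrow> axis \<Rightarrow> real) \<Rightarrow> ('k \<Rightarrow> real)
   \<Rightarrow> 'k \<Rightarrow> 'k \<Rightarrow> ('k \<Rightarrow> axis \<Rightarrow> real) \<Rightarrow> ('k \<Rightarrow> axis \<Rightarrow> real) \<Rightarrow> bool" where
  "in_QFLP L lb ub \<alpha> i j c l \<longleftrightarrow>
     (\<forall>s\<in>{AX, AY}. \<forall>k\<in>{i, j}.
        l k s / 2 \<le> c k s \<and> c k s \<le> L s - l k s / 2 \<and>
        lb k s \<le> l k s \<and> l k s \<le> ub k s) \<and>
     (\<forall>k\<in>{i, j}. l k AX * l k AY \<ge> \<alpha> k)"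

definition pairs :: "'k \<Rightarrow> 'k \<Rightarrow> ('k \<times> 'k) set" where
  "pairs i j = {(i, j), (j, i)}"

definition linform ::
  "'k \<Rightarrow> 'k \<Rightarrow> ('k \<Rightarrow> axis \<Rightarrow> real) \<Rightarrow> ('k \<Rightarrow> axis \<Rightarrow> real) \<Rightarrow> (axis \<Rightarrow> 'k \<Rightarrow> 'k \<Rightarrow> real)
   \<Rightarrow> ('k \<Rightarrow> axis \<Rightarrow> real) \<Rightarrow> ('k \<Rightarrow> axis \<Rightarrow> real) \<Rightarrow> (axis \<Rightarrow> 'k \<Rightarrow> 'k \<Rightarrow> real) \<Rightarrow> real" where
  "linform i j a b \<delta> c l u =
     (\<Sum>s\<in>{AX, AY}. \<Sum>k\<in>{i, j}. a k s * c k s + b k s * l k s) +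
     (\<Sum>s\<in>{AX, AY}. \<Sum>(p, q)\<in>pairs i j. \<delta> s p q * u s p q)"

definition in_EU ::
  "(axis \<Rightarrow> real) \<Rightarrow> ('k \<Rightarrow> axis \<Rightarrow> real) \<Rightarrow> ('k \<Rightarrow> axis \<Rightarrow> real) \<Rightarrow> ('k \<Rightarrow> real)
   \<Rightarrow> 'k \<Rightarrow> 'k \<Rightarrow> ('k \<Rightarrow> axis \<Rightarrow> real) \<Rightarrow> ('k \<Rightarrow> axis \<Rightarrow> real) \<Rightarrow> (axis \<Rightarrow> 'k \<Rightarrow> 'k \<Rightarrow> real) \<Rightarrow> bool" where
  "in_EU L lb ub \<alpha> i j c l u \<longleftrightarrow>
     in_QFLP L lb ub \<alpha> i j c l \<and>
     (\<forall>s\<in>{AX, AY}. \<forall>(p, q)\<in>pairs i j. u s p q \<in> {0, 1}) \<and>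
     card {(s, p, q). s \<in> {AX, AY} \<and> (p, q) \<in> pairs i j \<and> u s p q = 1} = 1 \<and>
     (\<forall>s\<in>{AX, AY}. \<forall>(p, q)\<in>pairs i j. u s p q = 1 \<longrightarrow> precedes c l s p q)"

definition in_E8 ::
  "(axis \<Rightarrow> real) \<Rightarrow> ('k \<Rightarrow> axis \<Rightarrow> real) \<Rightarrow> ('k \<Rightarrow> axis \<Rightarrow> real) \<Rightarrow> ('k \<Rightarrow> real)
   \<Rightarrow> 'k \<Rightarrow> 'k \<Rightarrow> ('k \<Rightarrow> axis \<Rightarrow> real) \<Rightarrow> ('k \<Rightarrow> axis \<Rightarrow> real) \<Rightarrow> (axis \<Rightarrow> 'k \<Rightarrow> 'k \<Rightarrow> real) \<Rightarrow> bool" where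
  "in_E8 L lb ub \<alpha> i j c l z \<longleftrightarrow>
     in_QFLP L lb ub \<alpha> i j c l \<and>
     (\<forall>s\<in>{AX, AY}. \<forall>(p, q)\<in>pairs i j. z s p q \<in> {0, 1}) \<and>
     (\<exists>s\<in>{AX, AY}. \<exists>(p, q)\<in>pairs i j. z s p q \<noteq> 0) \<and>
     (\<forall>s\<in>{AX, AY}. z s i j + z s j i \<le> 1) \<and>
     (\<forall>s\<in>{AX, AY}. \<forall>(p, q)\<in>pairs i j. z s p q = 1 \<longrightarrow> precedes c l s p q) \<and>
     (\<forall>s\<in>{AX, AY}. z s i j = 0 \<and> z s j i = 0 \<longrightarrow>
        not_precedes c l s i j \<and> not_precedes c l s j i)"

end

theory Submission
  imports Defs
begin

text \<open>If \<delta> vanishes on the axis T, a point of E^8 has an axis S carrying a 1 of z such that the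
  z-entries off S contribute nothing to the objective: S is the other axis if its z-entries are
  not both 0, and T otherwise. Keeping only the S-entries of z (exactly one of which is 1) then
  gives a point of E^U with the same objective value.\<close>

definition restrict_axis :: "axis \<Rightarrow> (axis \<Rightarrow> 'k \<Rightarrow> 'k \<Rightarrow> real) \<Rightarrow> axis \<Rightarrow> 'k \<Rightarrow> 'k \<Rightarrow> real" where
  "restrict_axis S z = (\<lambda>s p q. if s = S then z s p q else 0)"

lemma linform_cong_weighted:
  assumes "\<And>s. \<delta> s i j * u s i j = \<delta> s i j * v s i j"
    and "\<And>s. \<delta> s j i * u s j i = \<delta> s j i * v s j i"
  shows "linform i j a b \<delta> c l u = linform i j a b \<delta> c l v"
proof -
  have "(\<Sum>(p, q)\<in>pairs i j. \<delta> s p q * u s p q) = (\<Sum>(p, q)\<in>pairs i j. \<delta> s p q * v s p q)" for s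
    by (rule sum.cong) (auto simp: pairs_def assms)
  then show ?thesis by (simp add: linform_def)
qed

lemma in_E8_binary:
  assumes "in_E8 L lb ub \<alpha> i j c l z"
  shows "z s i j \<in> {0, 1}" and "z s j i \<in> {0, 1}"
  using assms by (cases s; simp add: in_E8_def pairs_def)+

lemma in_E8_restrict_axis_in_EU:
  assumes ij: "i \<noteq> j" and E: "in_E8 L lb ub \<alpha> i j c l z"
    and active: "z S i j = 1 \<or> z S j i = 1"
  shows "in_EU L lb ub \<alpha> i j c l (restrict_axis S z)"
proof -
  let ?ones = "{(s, p, q). s \<in> {AX, AY} \<and> (p, q) \<in> pairs i j \<and> restrict_axis S z s p q = 1}"
  have at_most_one: "z S i j + z S j i \<le> 1"
    using E by (cases S) (auto simp: in_E8_def)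
  have "?ones = {(S, i, j)} \<or> ?ones = {(S, j, i)}"
    using active at_most_one in_E8_binary[OF E, of S] ij
    by (cases S) (auto simp: restrict_axis_def pairs_def)
  then have "card ?ones = 1" by auto
  moreover have "\<forall>s\<in>{AX, AY}. \<forall>(p, q)\<in>pairs i j. restrict_axis S z s p q \<in> {0, 1}"
    using in_E8_binary[OF E] by (auto simp: restrict_axis_def pairs_def)
  moreover have "\<forall>s\<in>{AX, AY}. \<forall>(p, q)\<in>pairs i j.
      restrict_axis S z s p q = 1 \<longrightarrow> precedes c l s p q"
    using E by (auto simp: in_E8_def restrict_axis_def)
  moreover have "in_QFLP L lb ub \<alpha> i j c l"
    using E by (simp add: in_E8_def)
  ultimately show ?thesis
    unfolding in_EU_def by blast
qed

lemma in_E8_active_axis: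
  assumes E: "in_E8 L lb ub \<alpha> i j c l z"
    and silent_T: "\<delta> T i j = 0 \<and> \<delta> T j i = 0"
  obtains S where "z S i j = 1 \<or> z S j i = 1"
    and "\<And>s. s \<noteq> S \<Longrightarrow> \<delta> s i j * z s i j = 0 \<and> \<delta> s j i * z s j i = 0"
proof -
  obtain S where axes: "\<And>s. s = S \<or> s = T"
    by (cases T) (metis axis.exhaust)+
  have "\<exists>s\<in>{AX, AY}. \<exists>(p, q)\<in>pairs i j. z s p q \<noteq> 0"
    using E by (simp add: in_E8_def)
  then obtain s where "z s i j \<noteq> 0 \<or> z s j i \<noteq> 0"
    by (auto simp: pairs_def)
  then have nonzero: "z S i j \<noteq> 0 \<or> z S j i \<noteq> 0 \<or> z T i j \<noteq> 0 \<or> z T j i \<noteq> 0"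
    using axes[of s] by blast
  show ?thesis
  proof (cases "z S i j = 1 \<or> z S j i = 1")
    case True
    moreover have "\<delta> s i j * z s i j = 0 \<and> \<delta> s j i * z s j i = 0" if "s \<noteq> S" for s
      using axes[of s] that silent_T by auto
    ultimately show ?thesis using that by blast
  next
    case False
    then have S_zero: "z S i j = 0 \<and> z S j i = 0"
      using in_E8_binary[OF E, of S] by auto
    then have "z T i j = 1 \<or> z T j i = 1"
      using nonzero in_E8_binary[OF E, of T] by auto
    moreover have "\<delta> s i j * z s i j = 0 \<and> \<delta> s j i * z s j i = 0" if "s \<noteq> T" for s
      using axes[of s] that S_zero by auto
    ultimately show ?thesis using that by blast
  qed
qed

theorem proposition6p2:
  fixes L :: "axis \<Rightarrow> real"
    and lb ub :: "'k \<Rightarrow> axis \<Rightarrow> real"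
    and \<alpha> :: "'k \<Rightarrow> real"
    and i j :: 'k
    and a b :: "'k \<Rightarrow> axis \<Rightarrow> real"
    and \<delta> :: "axis \<Rightarrow> 'k \<Rightarrow> 'k \<Rightarrow> real"
    and f :: real
  assumes "L AX > 0" and "L AY > 0"
    and "i \<noteq> j"
    and "\<alpha> i > 0" and "\<alpha> j > 0"
    and valid: "\<And>c l u. in_EU L lb ub \<alpha> i j c l u \<Longrightarrow> linform i j a b \<delta> c l u \<le> f"
    and zero: "(\<delta> AY i j = 0 \<and> \<delta> AY j i = 0) \<or> (\<delta> AX i j = 0 \<and> \<delta> AX j i = 0)"
  shows "\<forall>c l z. in_E8 L lb ub \<alpha> i j c l z \<longrightarrow> linform i j a b \<delta> c l z \<le> f"
proof (intro allI impI)
  fix c l z assume E: "in_E8 L lb ub \<alpha> i j c l z"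
  obtain T where "\<delta> T i j = 0 \<and> \<delta> T j i = 0" using zero by blast
  then obtain S where active: "z S i j = 1 \<or> z S j i = 1"
    and silent: "\<And>s. s \<noteq> S \<Longrightarrow> \<delta> s i j * z s i j = 0 \<and> \<delta> s j i * z s j i = 0"
    using in_E8_active_axis[OF E] by blast
  have "linform i j a b \<delta> c l z = linform i j a b \<delta> c l (restrict_axis S z)"
    by (rule linform_cong_weighted) (metis restrict_axis_def mult_zero_right silent)+
  also have "\<dots> \<le> f"
    using valid in_E8_restrict_axis_in_EU[OF \<open>i \<noteq> j\<close> E active] by blast
  finally show "linform i j a b \<delta> c l z \<le> f" .
qed

end
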